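(* Let $T:C_e^\infty(S^{n-1})\to C_e^\infty(S^{n-1})$ be a linear operator and let $p>1$. Suppose $g\in C_e^\infty(S^{n-1})$ is strictly positive and $g^{p-1}\notin{\rm Pos}(T)$. Then there exists a strictly positive $f\in C_e^\infty(S^{n-1})$ such that $Tf(x)\le Tg(x)$ for every $x\in S^{n-1}$, but $\|f\|_{L_p(S^{n-1})}>\|g\|_{L_p(S^{n-1})}$.
   Context: $C_e^\infty(S^{n-1})$ is the space of even real-valued infinitely differentiable functions on $S^{n-1}$, ordered pointwise; "strictly positive" means $>0$ everywhere. For a linear operator $T:C_e^\infty(S^{n-1})\to C_e^\infty(S^{n-1})$, ${\rm Pos}(T)$ is the set of $h\in C_e^\infty(S^{n-1})$ such that $\int_{S^{n-1}}\phi(x)h(x)\,dx\ge 0$ for every $\phi\in C_e^\infty(S^{n-1})$ with $T\phi(x)\ge 0$ for all $x\in S^{n-1}$. Integrals and $L_p$ norms are with respect to surface measure on $S^{n-1}$. *)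

theory Defs
  imports "HOL-Analysis.Analysis"
begin

primrec diff_k :: "nat \<Rightarrow> 'a::euclidean_space set \<Rightarrow> ('a \<Rightarrow> real) \<Rightarrow> bool" where
  "diff_k 0 S f = True"
| "diff_k (Suc k) S f =
     ((\<forall>x\<in>S. f differentiable (at x)) \<and>
      (\<forall>b\<in>Basis. diff_k k S (\<lambda>x. frechet_derivative f (at x) b)))"

definition smooth_on :: "'a::euclidean_space set \<Rightarrow> ('a \<Rightarrow> real) \<Rightarrow> bool" where
  "smooth_on S f \<longleftrightarrow> (\<forall>k. diff_k k S f)"

abbreviation Sph :: "'a::euclidean_space set" where
  "Sph \<equiv> sphere 0 1"

text \<open>C_e^\<infinity>(S^{n-1}): even smooth functions on the sphere, represented extensionally
  (value 0 off the sphere). Smoothness on the sphere = smoothness of the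
  0-homogeneous extension on R^n minus the origin.\<close>
definition Ce :: "('a::euclidean_space \<Rightarrow> real) set" where
  "Ce = {h. smooth_on (- {0}) (\<lambda>x. h (x /\<^sub>R norm x))
            \<and> (\<forall>x\<in>Sph. h (- x) = h x)
            \<and> (\<forall>x. x \<notin> Sph \<longrightarrow> h x = 0)}"

text \<open>Integral w.r.t. surface measure on the sphere, via the polar/cone formula
  \<integral>_{S} f d\<sigma> = n \<integral>_{B} f(x/|x|) dx.\<close>
definition sph_integral :: "('a::euclidean_space \<Rightarrow> real) \<Rightarrow> real" where
  "sph_integral f = real DIM('a) * integral (ball 0 1) (\<lambda>x. f (x /\<^sub>R norm x))"

definition Lp_norm :: "real \<Rightarrow> ('a::euclidean_space \<Rightarrow> real) \<Rightarrow> real" where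
  "Lp_norm p f = (sph_integral (\<lambda>x. \<bar>f x\<bar> powr p)) powr (1 / p)"

definition linear_op_Ce :: "(('a::euclidean_space \<Rightarrow> real) \<Rightarrow> ('a \<Rightarrow> real)) \<Rightarrow> bool" where
  "linear_op_Ce T \<longleftrightarrow> (\<forall>f\<in>Ce. T f \<in> Ce)
     \<and> (\<forall>f\<in>Ce. \<forall>g\<in>Ce. T (\<lambda>x. f x + g x) = (\<lambda>x. T f x + T g x))
     \<and> (\<forall>f\<in>Ce. \<forall>c::real. T (\<lambda>x. c * f x) = (\<lambda>x. c * T f x))"

definition Pos :: "(('a::euclidean_space \<Rightarrow> real) \<Rightarrow> ('a \<Rightarrow> real)) \<Rightarrow> ('a \<Rightarrow> real) set" where
  "Pos T = {h\<in>Ce. \<forall>\<phi>\<in>Ce. (\<forall>x\<in>Sph. T \<phi> x \<ge> 0) \<longrightarrow> sph_integral (\<lambda>x. \<phi> x * h x) \<ge> 0}"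

end

theory Submission
  imports Defs
begin

text \<open>If \<open>g^{p-1}\<close> is not in \<open>Pos T\<close>, some \<open>\<phi>\<close> with \<open>T\<phi> \<ge> 0\<close> has \<open>\<integral>\<phi> g^{p-1} < 0\<close>.
  The function \<open>f = g - t\<phi>\<close> then satisfies \<open>Tf \<le> Tg\<close>, and for small \<open>t > 0\<close> it is
  still positive. Convexity of \<open>s \<mapsto> s^p\<close> gives \<open>f^p \<ge> g^p - p t \<phi> g^{p-1}\<close> pointwise,
  and integrating yields \<open>\<integral>f^p \<ge> \<integral>g^p - p t \<integral>\<phi> g^{p-1} > \<integral>g^p\<close>.\<close>

lemma diff_k_SucD: "diff_k (Suc k) S f \<Longrightarrow> diff_k k S f"
  by (induction k arbitrary: f) simp_all

lemma frechet_derivative_apply: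
  "(f has_derivative f') (at x) \<Longrightarrow> frechet_derivative f (at x) b = f' b"
  by (drule frechet_derivative_at) simp

lemma diff_k_cong:
  assumes "open S" "\<And>y. y \<in> S \<Longrightarrow> f y = g y" "diff_k k S f"
  shows "diff_k k S g"
  using assms(2,3)
proof (induction k arbitrary: f g)
  case 0
  then show ?case by simp
next
  case (Suc k)
  have g_deriv: "(g has_derivative frechet_derivative f (at x)) (at x)" if "x \<in> S" for x
  proof -
    have "(f has_derivative frechet_derivative f (at x)) (at x)"
      using Suc.prems(2) that by (simp add: frechet_derivative_works[symmetric])
    then show ?thesis
      using has_derivative_transform_within_open assms(1) that Suc.prems(1) by blast
  qed
  show ?case
  proof (simp, intro conjI ballI)
    show "g differentiable at x" if "x \<in> S" for x
      using g_deriv[OF that] differentiable_def by blast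
    fix b :: 'a assume "b \<in> Basis"
    then have "diff_k k S (\<lambda>x. frechet_derivative f (at x) b)" using Suc.prems by simp
    then show "diff_k k S (\<lambda>x. frechet_derivative g (at x) b)"
      by (rule Suc.IH[rotated]) (simp add: frechet_derivative_apply[OF g_deriv])
  qed
qed

lemma diff_k_const: "diff_k k S (\<lambda>x. c)"
proof (induction k arbitrary: c)
  case 0
  then show ?case by simp
next
  case (Suc k)
  have "frechet_derivative (\<lambda>x. c) (at x) = (\<lambda>h. 0)" for x :: 'a
    by (rule frechet_derivative_at[symmetric]) (rule has_derivative_const)
  then show ?case using Suc by simp
qed

lemma diff_k_add:
  assumes "open S" "diff_k k S f" "diff_k k S g"
  shows "diff_k k S (\<lambda>x. f x + g x)"
  using assms(2,3)
proof (induction k arbitrary: f g)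
  case 0
  then show ?case by simp
next
  case (Suc k)
  let ?f' = "\<lambda>x. frechet_derivative f (at x)" and ?g' = "\<lambda>x. frechet_derivative g (at x)"
  have deriv: "((\<lambda>x. f x + g x) has_derivative (\<lambda>h. ?f' x h + ?g' x h)) (at x)" if "x \<in> S" for x
    using Suc.prems that by (intro has_derivative_add) (simp_all add: frechet_derivative_works[symmetric])
  show ?case
  proof (simp, intro conjI ballI)
    show "(\<lambda>x. f x + g x) differentiable at x" if "x \<in> S" for x
      using deriv[OF that] differentiable_def by blast
    fix b :: 'a assume "b \<in> Basis"
    then have "diff_k k S (\<lambda>x. ?f' x b + ?g' x b)"
      using Suc.prems by (intro Suc.IH) simp_all
    then show "diff_k k S (\<lambda>x. frechet_derivative (\<lambda>x. f x + g x) (at x) b)"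
      by (rule diff_k_cong[OF assms(1), rotated]) (simp add: frechet_derivative_apply[OF deriv])
  qed
qed

lemma diff_k_mult:
  assumes "open S" "diff_k k S f" "diff_k k S g"
  shows "diff_k k S (\<lambda>x. f x * g x)"
  using assms(2,3)
proof (induction k arbitrary: f g)
  case 0
  then show ?case by simp
next
  case (Suc k)
  let ?f' = "\<lambda>x. frechet_derivative f (at x)" and ?g' = "\<lambda>x. frechet_derivative g (at x)"
  have deriv: "((\<lambda>x. f x * g x) has_derivative (\<lambda>h. f x * ?g' x h + ?f' x h * g x)) (at x)"
    if "x \<in> S" for x
    using Suc.prems that by (intro has_derivative_mult) (simp_all add: frechet_derivative_works[symmetric])
  show ?case
  proof (simp, intro conjI ballI)
    show "(\<lambda>x. f x * g x) differentiable at x" if "x \<in> S" for x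
      using deriv[OF that] differentiable_def by blast
    fix b :: 'a assume "b \<in> Basis"
    moreover have "diff_k k S f" "diff_k k S g" using Suc.prems diff_k_SucD by blast+
    ultimately have "diff_k k S (\<lambda>x. f x * ?g' x b + ?f' x b * g x)"
      using Suc.prems by (intro diff_k_add[OF assms(1)] Suc.IH) simp_all
    then show "diff_k k S (\<lambda>x. frechet_derivative (\<lambda>x. f x * g x) (at x) b)"
      by (rule diff_k_cong[OF assms(1), rotated]) (simp add: frechet_derivative_apply[OF deriv])
  qed
qed

lemma diff_k_powr:
  assumes "open S" "diff_k k S G" "\<And>x. x \<in> S \<Longrightarrow> G x > 0"
  shows "diff_k k S (\<lambda>x. G x powr q)"
  using assms(2,3)
proof (induction k arbitrary: G q)
  case 0
  then show ?case by simp
next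
  case (Suc k)
  let ?G' = "\<lambda>x. frechet_derivative G (at x)"
  have deriv: "((\<lambda>x. G x powr q) has_derivative (\<lambda>h. q * (G x powr (q - 1) * ?G' x h))) (at x)"
    if "x \<in> S" for x
  proof -
    have pos: "G x > 0" using Suc.prems(2) that by blast
    have "((\<lambda>x. G x powr q) has_derivative (\<lambda>h. G x powr q * (0 * ln (G x) + ?G' x h * q / G x))) (at x)"
      using Suc.prems(1) that pos
      by (intro has_derivative_powr has_derivative_const) (auto simp: frechet_derivative_works[symmetric])
    moreover have "(\<lambda>h. G x powr q * (0 * ln (G x) + ?G' x h * q / G x))
        = (\<lambda>h. q * (G x powr (q - 1) * ?G' x h))"
      using pos by (auto simp: powr_diff fun_eq_iff)
    ultimately show ?thesis by simp
  qed
  show ?case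
  proof (simp, intro conjI ballI)
    show "(\<lambda>x. G x powr q) differentiable at x" if "x \<in> S" for x
      using deriv[OF that] differentiable_def by blast
    fix b :: 'a assume "b \<in> Basis"
    moreover have "diff_k k S G" using Suc.prems diff_k_SucD by blast
    ultimately have "diff_k k S (\<lambda>x. q * (G x powr (q - 1) * ?G' x b))"
      using Suc.prems
      by (intro diff_k_mult[OF assms(1)] diff_k_const Suc.IH) simp_all
    then show "diff_k k S (\<lambda>x. frechet_derivative (\<lambda>x. G x powr q) (at x) b)"
      by (rule diff_k_cong[OF assms(1), rotated]) (simp add: frechet_derivative_apply[OF deriv])
  qed
qed

lemma open_Compl_zero: "open (- {0::'a::euclidean_space})"
  by auto

lemma Ce_continuous_on:
  assumes "f \<in> Ce"
  shows "continuous_on Sph f"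
proof -
  have "diff_k (Suc 0) (- {0}) (\<lambda>x. f (x /\<^sub>R norm x))"
    using assms unfolding Ce_def smooth_on_def by blast
  then have "continuous_on (- {0}) (\<lambda>x. f (x /\<^sub>R norm x))"
    by (auto intro!: continuous_at_imp_continuous_on differentiable_imp_continuous_within)
  then have "continuous_on Sph (\<lambda>x. f (x /\<^sub>R norm x))"
    by (rule continuous_on_subset) auto
  then show ?thesis
    by (rule continuous_on_eq) auto
qed

lemma Ce_add: "u \<in> Ce \<Longrightarrow> v \<in> Ce \<Longrightarrow> (\<lambda>x. u x + v x) \<in> Ce"
  unfolding Ce_def smooth_on_def by (auto intro: diff_k_add[OF open_Compl_zero])

lemma Ce_cmult: "u \<in> Ce \<Longrightarrow> (\<lambda>x. c * u x) \<in> Ce"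
  unfolding Ce_def smooth_on_def by (auto intro: diff_k_mult[OF open_Compl_zero diff_k_const])

lemma Ce_powr:
  assumes "g \<in> Ce" "\<forall>x\<in>Sph. g x > 0"
  shows "(\<lambda>x. if x \<in> Sph then g x powr q else 0) \<in> Ce"
proof -
  have unit: "x /\<^sub>R norm x \<in> Sph" if "x \<in> - {0}" for x :: 'a
    using that by auto
  have "diff_k k (- {0}) (\<lambda>x. g (x /\<^sub>R norm x) powr q)" for k
    using assms unit unfolding Ce_def smooth_on_def
    by (intro diff_k_powr[OF open_Compl_zero]) auto
  then have "diff_k k (- {0}) (\<lambda>x. if x /\<^sub>R norm x \<in> Sph then g (x /\<^sub>R norm x) powr q else 0)" for k
    by (rule diff_k_cong[OF open_Compl_zero, rotated]) (simp add: unit)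
  then show ?thesis
    using assms(1) unfolding Ce_def smooth_on_def by auto
qed

lemma linear_op_Ce_add_cmult:
  assumes "linear_op_Ce T" "f \<in> Ce" "g \<in> Ce"
  shows "T (\<lambda>x. f x + c * g x) = (\<lambda>x. T f x + c * T g x)"
proof -
  have add: "\<forall>f\<in>Ce. \<forall>g\<in>Ce. T (\<lambda>x. f x + g x) = (\<lambda>x. T f x + T g x)"
    and cmult: "\<forall>f\<in>Ce. \<forall>c. T (\<lambda>x. c * f x) = (\<lambda>x. c * T f x)"
    using assms(1) unfolding linear_op_Ce_def by blast+
  have "T (\<lambda>x. f x + c * g x) = (\<lambda>x. T f x + T (\<lambda>x. c * g x) x)"
    using add[rule_format, OF assms(2) Ce_cmult[OF assms(3)]] .
  also have "T (\<lambda>x. c * g x) = (\<lambda>x. c * T g x)"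
    using cmult assms(3) by blast
  finally show ?thesis .
qed

text \<open>The cone \<open>x \<mapsto> x / \<parallel>x\<parallel>\<close> sends \<open>0\<close> to \<open>0 \<notin> Sph\<close>; removing that
  negligible point lets \<open>sph_integral\<close> see only values on the sphere.\<close>

lemma sph_integral_punctured:
  "sph_integral F = real DIM('a) * integral (ball 0 1 - {0}) (\<lambda>x::'a::euclidean_space. F (x /\<^sub>R norm x))"
  unfolding sph_integral_def
  by (subst integral_spike_set) (auto intro: negligible_subset[of "{0}"])

lemma sph_integrable_punctured:
  fixes F :: "'a::euclidean_space \<Rightarrow> real"
  assumes "continuous_on Sph F"
  shows "(\<lambda>x. F (x /\<^sub>R norm x)) integrable_on (ball 0 1 - {0})"
proof -
  obtain B where B: "\<And>y. y \<in> Sph \<Longrightarrow> norm (F y) \<le> B"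
    using compact_continuous_image[OF assms compact_sphere]
    by (metis compact_imp_bounded bounded_iff imageI)
  have "continuous_on (ball 0 1 - {0}) (\<lambda>x::'a. x /\<^sub>R norm x)"
    by (intro continuous_intros) auto
  then have cont: "continuous_on (ball 0 1 - {0}) (\<lambda>x. F (x /\<^sub>R norm x))"
    by (rule continuous_on_compose2[OF assms]) (auto simp: field_simps split: if_splits)
  show ?thesis
  proof (rule measurable_bounded_by_integrable_imp_integrable)
    show "(\<lambda>x. F (x /\<^sub>R norm x)) \<in> borel_measurable (lebesgue_on (ball 0 1 - {0}))"
      by (rule continuous_imp_measurable_on_sets_lebesgue[OF cont]) auto
    show "(\<lambda>x. B) integrable_on (ball 0 1 - {0})"
      by (rule integrable_on_const) (simp add: fmeasurable_Diff)
    show "norm (F (x /\<^sub>R norm x)) \<le> B" if "x \<in> ball 0 1 - {0}" for x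
      using that by (intro B) auto
  qed auto
qed

lemma sph_integral_cong:
  "(\<And>x. x \<in> Sph \<Longrightarrow> F x = G x) \<Longrightarrow> sph_integral F = sph_integral G"
  unfolding sph_integral_punctured by (intro arg_cong2[where f = "(*)"] integral_cong) auto

lemma sph_integral_mono:
  fixes F G :: "'a::euclidean_space \<Rightarrow> real"
  assumes "continuous_on Sph F" "continuous_on Sph G" "\<And>x. x \<in> Sph \<Longrightarrow> F x \<le> G x"
  shows "sph_integral F \<le> sph_integral G"
  unfolding sph_integral_punctured using assms
  by (intro mult_left_mono integral_le sph_integrable_punctured) auto

lemma sph_integral_add:
  fixes F G :: "'a::euclidean_space \<Rightarrow> real"
  assumes "continuous_on Sph F" "continuous_on Sph G"
  shows "sph_integral (\<lambda>x. F x + G x) = sph_integral F + sph_integral G"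
  unfolding sph_integral_punctured
  by (simp add: integral_add sph_integrable_punctured[OF assms(1)]
      sph_integrable_punctured[OF assms(2)] distrib_left)

lemma sph_integral_cmult: "sph_integral (\<lambda>x. c * F x) = c * sph_integral F"
  unfolding sph_integral_def using integral_cmul[of "ball 0 1" c "\<lambda>x. F (x /\<^sub>R norm x)"] by simp

lemma powr_above_tangent:
  fixes a b p :: real
  assumes "a > 0" "b > 0" "p \<ge> 1"
  shows "b powr p + p * b powr (p - 1) * (a - b) \<le> a powr p"
proof -
  have "(p * b powr (p - 1)) * (a - b) \<le> a powr p - b powr p"
  proof (rule convex_on_imp_above_tangent[OF powr_convex[OF assms(3)] connected_Ioi])
    show "b \<in> interior {0<..}" "a \<in> {0<..}"
      using assms by (simp_all add: interior_open)
    show "((\<lambda>x. x powr p) has_field_derivative p * b powr (p - 1)) (at b within {0<..})"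
      using assms by (auto intro!: derivative_eq_intros)
  qed
  then show ?thesis by simp
qed

lemma Lp_norm_less_perturbation:
  fixes g \<phi> :: "'a::euclidean_space \<Rightarrow> real"
  assumes "p > 1" "t > 0" "continuous_on Sph g" "continuous_on Sph \<phi>"
    and g_pos: "\<forall>x\<in>Sph. g x > 0" and f_pos: "\<forall>x\<in>Sph. g x - t * \<phi> x > 0"
    and neg: "sph_integral (\<lambda>x. \<phi> x * g x powr (p - 1)) < 0"
  shows "Lp_norm p g < Lp_norm p (\<lambda>x. g x - t * \<phi> x)"
proof -
  let ?Ig = "sph_integral (\<lambda>x. \<bar>g x\<bar> powr p)"
  let ?If = "sph_integral (\<lambda>x. \<bar>g x - t * \<phi> x\<bar> powr p)"
  let ?tangent = "\<lambda>x. \<bar>g x\<bar> powr p + (- (p * t)) * (\<phi> x * g x powr (p - 1))"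
  have cont_gp: "continuous_on Sph (\<lambda>x. \<bar>g x\<bar> powr p)"
    using assms(3) g_pos by (intro continuous_intros) auto
  have cont_prod: "continuous_on Sph (\<lambda>x. \<phi> x * g x powr (p - 1))"
    using assms(3,4) g_pos by (intro continuous_intros) auto
  have "?Ig < ?Ig + (- (p * t)) * sph_integral (\<lambda>x. \<phi> x * g x powr (p - 1))"
    using assms(1,2) neg by (simp add: mult_pos_neg)
  also have "\<dots> = ?Ig + sph_integral (\<lambda>x. (- (p * t)) * (\<phi> x * g x powr (p - 1)))"
    by (simp only: sph_integral_cmult)
  also have "\<dots> = sph_integral ?tangent"
    by (intro sph_integral_add[symmetric] cont_gp continuous_on_mult_left cont_prod)
  also have "\<dots> \<le> ?If"
  proof (rule sph_integral_mono)
    show "continuous_on Sph ?tangent"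
      by (intro continuous_on_add cont_gp continuous_on_mult_left cont_prod)
    show "continuous_on Sph (\<lambda>x. \<bar>g x - t * \<phi> x\<bar> powr p)"
      using assms(3,4) f_pos by (intro continuous_intros) (auto dest: bspec)
    show "?tangent x \<le> \<bar>g x - t * \<phi> x\<bar> powr p" if "x \<in> Sph" for x
    proof -
      have "g x > 0" "g x - t * \<phi> x > 0" using g_pos f_pos that by auto
      then show ?thesis
        using powr_above_tangent[of "g x - t * \<phi> x" "g x" p] assms(1) by (simp add: algebra_simps)
    qed
  qed
  finally have "?Ig < ?If" .
  moreover have "0 \<le> ?Ig"
    using sph_integral_mono[of "\<lambda>x. 0" "\<lambda>x. \<bar>g x\<bar> powr p"] cont_gp
    by (simp add: sph_integral_def)
  ultimately show ?thesis
    unfolding Lp_norm_def using assms(1) by (intro powr_less_mono2) auto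
qed

lemma compact_exists_pos_scaled_below:
  fixes g \<phi> :: "'b::topological_space \<Rightarrow> real"
  assumes "compact K" "continuous_on K g" "continuous_on K \<phi>" "\<forall>x\<in>K. g x > 0"
  shows "\<exists>t>0. \<forall>x\<in>K. g x - t * \<phi> x > 0"
proof (cases "K = {}")
  case True
  then show ?thesis by (intro exI[of _ 1]) simp
next
  case False
  have "continuous_on K (\<lambda>x. g x / (1 + \<bar>\<phi> x\<bar>))"
    using assms(2,3) by (intro continuous_intros) (auto simp: add_pos_nonneg)
  then obtain x0 where x0: "x0 \<in> K" "\<forall>x\<in>K. g x0 / (1 + \<bar>\<phi> x0\<bar>) \<le> g x / (1 + \<bar>\<phi> x\<bar>)"
    using continuous_attains_inf[OF assms(1) False] by blast
  define t where "t = g x0 / (1 + \<bar>\<phi> x0\<bar>)"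
  have t_pos: "t > 0" using x0(1) assms(4) by (simp add: t_def add_pos_nonneg)
  have "t * \<phi> x < g x" if "x \<in> K" for x
  proof -
    have "t * \<phi> x \<le> t * \<bar>\<phi> x\<bar>" using t_pos by (simp add: mult_left_mono)
    also have "\<dots> < t * (1 + \<bar>\<phi> x\<bar>)" using t_pos by simp
    also have "\<dots> \<le> g x"
      using x0(2) that unfolding t_def by (simp add: pos_le_divide_eq add_pos_nonneg)
    finally show ?thesis .
  qed
  then show ?thesis using t_pos by auto
qed

theorem lemma2:
  fixes T :: "('a::euclidean_space \<Rightarrow> real) \<Rightarrow> ('a \<Rightarrow> real)"
    and g :: "'a \<Rightarrow> real" and p :: real
  assumes "linear_op_Ce T"
    and "p > 1"
    and "g \<in> Ce"
    and "\<forall>x\<in>Sph. g x > 0"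
    and "(\<lambda>x. if x \<in> Sph then g x powr (p - 1) else 0) \<notin> Pos T"
  shows "\<exists>f\<in>Ce. (\<forall>x\<in>Sph. f x > 0) \<and> (\<forall>x\<in>Sph. T f x \<le> T g x)
               \<and> Lp_norm p f > Lp_norm p g"
proof -
  obtain \<phi> where \<phi>: "\<phi> \<in> Ce" "\<forall>x\<in>Sph. T \<phi> x \<ge> 0"
    and "\<not> sph_integral (\<lambda>x. \<phi> x * (if x \<in> Sph then g x powr (p - 1) else 0)) \<ge> 0"
    using assms(5) Ce_powr[OF assms(3,4)] unfolding Pos_def by auto
  then have neg: "sph_integral (\<lambda>x. \<phi> x * g x powr (p - 1)) < 0"
    by (subst (asm) sph_integral_cong[where G = "\<lambda>x. \<phi> x * g x powr (p - 1)"]) auto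
  obtain t where t: "t > 0" "\<forall>x\<in>Sph. g x - t * \<phi> x > 0"
    using compact_exists_pos_scaled_below[OF compact_sphere Ce_continuous_on[OF assms(3)]
        Ce_continuous_on[OF \<phi>(1)] assms(4)] by blast
  define f where "f = (\<lambda>x. g x + (- t) * \<phi> x)"
  have "f \<in> Ce" unfolding f_def using assms(3) \<phi>(1) by (intro Ce_add Ce_cmult)
  moreover have "\<forall>x\<in>Sph. T f x \<le> T g x"
    using \<phi>(2) t(1) unfolding f_def linear_op_Ce_add_cmult[OF assms(1,3) \<phi>(1)] by simp
  moreover have "Lp_norm p g < Lp_norm p f"
    using Lp_norm_less_perturbation[OF assms(2) t(1) Ce_continuous_on[OF assms(3)]
        Ce_continuous_on[OF \<phi>(1)] assms(4) t(2) neg] by (simp add: f_def)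
  ultimately show ?thesis
    using t(2) by (intro bexI[where x = f] conjI) (auto simp: f_def)
qed

end
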